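(* Let $C$ be a program of the probabilistic guarded command language pProgs, let $k\in\mathbb{R}_{\geq 0}$ with $\mathbf{k}=\lambda\sigma.\,k$ the corresponding constant run-time, let $r\in\mathbb{R}_{\geq 0}$, and let $f,g\in\mathbb{T}$ be run-times. Then: (1) (Monotonicity) $f\preceq g$ implies $\mathsf{ert}[C](f)\preceq\mathsf{ert}[C](g)$; (2) (Propagation of constants) if $C$ is $\mathtt{halt}$-free, then $\mathsf{ert}[C](\mathbf{k}+f)=\mathbf{k}+\mathsf{ert}[C](f)$; (3) (Preservation of $\infty$) if $C$ is $\mathtt{halt}$-free, then $\mathsf{ert}[C](\boldsymbol{\infty})=\boldsymbol{\infty}$, where $\boldsymbol{\infty}=\lambda\sigma.\,\infty$; (4) (Sub-additivity) if $C$ is fully probabilistic (contains no non-deterministic choice $\{C_1\}\,\square\,\{C_2\}$), then $\mathsf{ert}[C](f+g)\preceq\mathsf{ert}[C](f)+\mathsf{ert}[C](g)$; (5) (Scaling) $\mathsf{ert}[C](r\cdot f)\succeq\min\{1,r\}\cdot\mathsf{ert}[C](f)$ and $\mathsf{ert}[C](r\cdot f)\preceq\max\{1,r\}\cdot\mathsf{ert}[C](f)$.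
   Context: Programs $C\in$ pProgs are generated by the grammar $C ::= \mathtt{empty} \mid \mathtt{skip} \mid \mathtt{halt} \mid x :\approx \mu \mid C;C \mid \{C\}\,\square\,\{C\} \mid \mathtt{if}\,(\xi)\,\{C\}\,\mathtt{else}\,\{C\} \mid \mathtt{while}\,(\xi)\,\{C\}$, where $x$ is a program variable, $\mu$ a distribution expression and $\xi$ a distribution expression over truth values (probabilistic guard). A program state $\sigma$ maps program variables to values; $\Sigma$ is the set of states. Each distribution expression $\mu$ has an interpretation $[\![\mu]\!]:\Sigma\to\mathcal{D}(\mathsf{Vals})$ assigning to each state a discrete probability distribution of total mass 1 over values; $[\mu:v](\sigma)$ denotes the probability that $[\![\mu]\!](\sigma)$ assigns to $v$, so $[\xi:\mathsf{false}]=1-[\xi:\mathsf{true}]$. Run-times are the functions $\mathbb{T}=\{f\mid f:\Sigma\to\mathbb{R}_{\geq0}\cup\{\infty\}\}$, ordered pointwise by $f\preceq g$ iff $f(\sigma)\le g(\sigma)$ for all $\sigma$; arithmetic on run-times is pointwise (with $0\cdot\infty=0$). The expected run-time transformer $\mathsf{ert}[C]:\mathbb{T}\to\mathbb{T}$ is defined by: $\mathsf{ert}[\mathtt{empty}](f)=f$; $\mathsf{ert}[\mathtt{skip}](f)=\mathbf{1}+f$; $\mathsf{ert}[\mathtt{halt}](f)=\mathbf{0}$; $\mathsf{ert}[x:\approx\mu](f)=\mathbf{1}+\lambda\sigma.\sum_v [\![\mu]\!](\sigma)(v)\cdot f(\sigma[x/v])$; $\mathsf{ert}[C_1;C_2](f)=\mathsf{ert}[C_1](\mathsf{ert}[C_2](f))$;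 $\mathsf{ert}[\{C_1\}\square\{C_2\}](f)=\max\{\mathsf{ert}[C_1](f),\mathsf{ert}[C_2](f)\}$ (pointwise); $\mathsf{ert}[\mathtt{if}(\xi)\{C_1\}\mathtt{else}\{C_2\}](f)=\mathbf{1}+[\xi:\mathsf{true}]\cdot\mathsf{ert}[C_1](f)+[\xi:\mathsf{false}]\cdot\mathsf{ert}[C_2](f)$; $\mathsf{ert}[\mathtt{while}(\xi)\{C'\}](f)=\mathrm{lfp}\,X.\ \mathbf{1}+[\xi:\mathsf{false}]\cdot f+[\xi:\mathsf{true}]\cdot\mathsf{ert}[C'](X)$ (least fixed point w.r.t. $\preceq$). Here $\mathbf{c}=\lambda\sigma.\,c$ denotes a constant run-time. *)

theory Defs
  imports "HOL-Probability.Probability_Mass_Function"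
begin

type_synonym ('x, 'v) state = "'x \<Rightarrow> 'v"
type_synonym ('x, 'v) dexp = "('x, 'v) state \<Rightarrow> 'v pmf"
type_synonym ('x, 'v) guard = "('x, 'v) state \<Rightarrow> bool pmf"

text \<open>Run-times: functions from states to extended non-negative reals
  (ennreal, where 0 * \<infinity> = 0), ordered pointwise.\<close>
type_synonym ('x, 'v) runtime = "('x, 'v) state \<Rightarrow> ennreal"

datatype ('x, 'v) prog =
    Empty
  | Skip
  | Halt
  | Assign 'x "('x, 'v) dexp"
  | Seq "('x, 'v) prog" "('x, 'v) prog"
  | NDChoice "('x, 'v) prog" "('x, 'v) prog"
  | If "('x, 'v) guard" "('x, 'v) prog" "('x, 'v) prog"
  | While "('x, 'v) guard" "('x, 'v) prog"

primrec ert :: "('x, 'v) prog \<Rightarrow> ('x, 'v) runtime \<Rightarrow> ('x, 'v) runtime" where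
  "ert Empty f = f"
| "ert Skip f = (\<lambda>\<sigma>. 1 + f \<sigma>)"
| "ert Halt f = (\<lambda>\<sigma>. 0)"
| "ert (Assign x \<mu>) f =
     (\<lambda>\<sigma>. 1 + (\<integral>\<^sup>+ v. f (\<sigma>(x := v)) \<partial>measure_pmf (\<mu> \<sigma>)))"
| "ert (Seq C1 C2) f = ert C1 (ert C2 f)"
| "ert (NDChoice C1 C2) f = (\<lambda>\<sigma>. max (ert C1 f \<sigma>) (ert C2 f \<sigma>))"
| "ert (If \<xi> C1 C2) f =
     (\<lambda>\<sigma>. 1 + ennreal (pmf (\<xi> \<sigma>) True) * ert C1 f \<sigma>
             + ennreal (pmf (\<xi> \<sigma>) False) * ert C2 f \<sigma>)"
| "ert (While \<xi> C) f =
     lfp (\<lambda>X \<sigma>. 1 + ennreal (pmf (\<xi> \<sigma>) False) * f \<sigma>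
                   + ennreal (pmf (\<xi> \<sigma>) True) * ert C X \<sigma>)"

primrec halt_free :: "('x, 'v) prog \<Rightarrow> bool" where
  "halt_free Empty = True"
| "halt_free Skip = True"
| "halt_free Halt = False"
| "halt_free (Assign x \<mu>) = True"
| "halt_free (Seq C1 C2) = (halt_free C1 \<and> halt_free C2)"
| "halt_free (NDChoice C1 C2) = (halt_free C1 \<and> halt_free C2)"
| "halt_free (If \<xi> C1 C2) = (halt_free C1 \<and> halt_free C2)"
| "halt_free (While \<xi> C) = halt_free C"

primrec fully_prob :: "('x, 'v) prog \<Rightarrow> bool" where
  "fully_prob Empty = True"
| "fully_prob Skip = True"
| "fully_prob Halt = True"
| "fully_prob (Assign x \<mu>) = True"
| "fully_prob (Seq C1 C2) = (fully_prob C1 \<and> fully_prob C2)"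
| "fully_prob (NDChoice C1 C2) = False"
| "fully_prob (If \<xi> C1 C2) = (fully_prob C1 \<and> fully_prob C2)"
| "fully_prob (While \<xi> C) = fully_prob C"

end

theory Submission
  imports Defs
begin

text \<open>The only
  non-routine case is the loop, whose run-time is the least fixed point of its characteristic
  functional: upper bounds follow by exhibiting a prefixed point (Park induction), lower bounds
  by transfinite induction over the fixed-point iteration. For constants and \<open>\<infinity>\<close> one also
  needs that a halt-free program never takes less than a constant lower bound of its
  continuation run-time; for loops this holds because every iteration costs one time unit.\<close>

lemma ennreal_pmf_True_plus_False: "ennreal (pmf p True) + ennreal (pmf p False) = 1"
  by (simp add: pmf_False_conv_True pmf_le_1 flip: ennreal_plus)

lemma ert_mono: "f \<le> g \<Longrightarrow> ert C f \<le> ert C g"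
proof (induction C arbitrary: f g)
  case (Assign x \<mu>)
  then show ?case by (auto simp: le_fun_def intro!: add_mono nn_integral_mono)
next
  case (NDChoice C1 C2)
  then have "ert C1 f \<le> ert C1 g" "ert C2 f \<le> ert C2 g" by auto
  then show ?case unfolding ert.simps by (intro le_funI max.mono) (auto dest: le_funD)
next
  case (If \<xi> C1 C2)
  then show ?case by (fastforce simp: le_fun_def intro!: add_mono mult_left_mono)
next
  case (While \<xi> C)
  then show ?case
    unfolding ert.simps
    by (intro lfp_mono) (fastforce simp: le_fun_def intro!: add_mono mult_left_mono)
qed (auto simp: le_fun_def)

definition loop_char ::
    "('x, 'v) guard \<Rightarrow> ('x, 'v) prog \<Rightarrow> ('x, 'v) runtime \<Rightarrow> ('x, 'v) runtime \<Rightarrow> ('x, 'v) runtime"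
  where "loop_char \<xi> C f = (\<lambda>X \<sigma>. 1 + ennreal (pmf (\<xi> \<sigma>) False) * f \<sigma>
                                 + ennreal (pmf (\<xi> \<sigma>) True) * ert C X \<sigma>)"

lemma mono_loop_char: "mono (loop_char \<xi> C f)"
  unfolding loop_char_def mono_def
  by (fastforce simp: le_fun_def intro!: add_mono mult_left_mono dest: ert_mono)

lemma ert_While_lfp: "ert (While \<xi> C) f = lfp (loop_char \<xi> C f)"
  by (simp add: loop_char_def)

lemma ert_While_unfold: "ert (While \<xi> C) f = loop_char \<xi> C f (ert (While \<xi> C) f)"
  unfolding ert_While_lfp using lfp_unfold[OF mono_loop_char] .

lemma ert_While_le: "loop_char \<xi> C f X \<le> X \<Longrightarrow> ert (While \<xi> C) f \<le> X"
  unfolding ert_While_lfp by (rule lfp_lowerbound)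

lemma const_le_ert: "halt_free C \<Longrightarrow> (\<And>\<sigma>. c \<le> f \<sigma>) \<Longrightarrow> c \<le> ert C f \<sigma>"
proof (induction C arbitrary: f \<sigma> c)
  case Skip
  then show ?case by (simp add: add_increasing)
next
  case (Assign x \<mu>)
  have "c = (\<integral>\<^sup>+ v. c \<partial>measure_pmf (\<mu> \<sigma>))" by simp
  also have "\<dots> \<le> (\<integral>\<^sup>+ v. f (\<sigma>(x := v)) \<partial>measure_pmf (\<mu> \<sigma>))"
    using Assign by (intro nn_integral_mono) auto
  finally show ?case by (simp add: add_increasing)
next
  case (NDChoice C1 C2)
  then show ?case by (simp add: le_max_iff_disj)
next
  case (If \<xi> C1 C2)
  let ?p = "ennreal (pmf (\<xi> \<sigma>) True)" and ?q = "ennreal (pmf (\<xi> \<sigma>) False)"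
  have "c = ?p * c + ?q * c" by (simp add: ennreal_pmf_True_plus_False flip: distrib_right)
  also have "\<dots> \<le> ?p * ert C1 f \<sigma> + ?q * ert C2 f \<sigma>"
    using If by (intro add_mono mult_left_mono) auto
  finally show ?case by (simp add: add_increasing add.assoc)
next
  case (While \<xi> C)
  have "(\<lambda>_. c) \<le> ert (While \<xi> C) f"
    unfolding ert_While_lfp
  proof (rule lfp_greatest)
    fix X assume X: "loop_char \<xi> C f X \<le> X"
    define m where "m = (INF \<sigma>. X \<sigma>)"
    define d where "d = min c m"
    \<comment> \<open>\<open>d\<close> bounds both \<open>f\<close> and \<open>X\<close> from below; one more iteration adds a time unit to it.\<close>
    have "1 + d \<le> X \<sigma>" for \<sigma>
    proof -
      let ?p = "ennreal (pmf (\<xi> \<sigma>) True)" and ?q = "ennreal (pmf (\<xi> \<sigma>) False)"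
      have "d \<le> X \<tau>" for \<tau> unfolding d_def m_def by (simp add: min.coboundedI2 INF_lower)
      then have "d \<le> ert C X \<sigma>" using While.prems(1) by (intro While.IH) auto
      moreover have "d \<le> f \<sigma>" using While.prems(2) by (simp add: d_def min.coboundedI1)
      ultimately have "?q * d + ?p * d \<le> ?q * f \<sigma> + ?p * ert C X \<sigma>"
        by (intro add_mono mult_left_mono) auto
      then have "1 + d \<le> loop_char \<xi> C f X \<sigma>"
        by (simp add: loop_char_def add.assoc add.commute[of ?q]
              ennreal_pmf_True_plus_False flip: distrib_right)
      also have "\<dots> \<le> X \<sigma>" using X by (simp add: le_fun_def)
      finally show ?thesis .
    qed
    then have "1 + d \<le> m" unfolding m_def by (rule INF_greatest)
    have "c \<le> m"
    proof (rule ccontr)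
      assume "\<not> c \<le> m"
      with \<open>1 + d \<le> m\<close> have "1 + m \<le> m" by (simp add: d_def)
      then have "m = \<infinity>" using ennreal_add_left_cancel_le[of m 1 0] by (auto simp: add.commute)
      with \<open>\<not> c \<le> m\<close> show False by simp
    qed
    then show "(\<lambda>_. c) \<le> X" by (auto simp: le_fun_def m_def intro: order_trans INF_lower)
  qed
  then show ?case by (simp add: le_fun_def)
qed auto

lemma affine_step_add_const:
  fixes p q c a b :: ennreal
  assumes "p + q = 1"
  shows "1 + p * (c + a) + q * (c + b) = c + (1 + p * a + q * b)"
proof -
  have "1 + p * (c + a) + q * (c + b) = (p + q) * c + (1 + p * a + q * b)"
    by (simp add: distrib_left distrib_right ac_simps)
  with assms show ?thesis by simp
qed

lemma ert_add_const:
  assumes "halt_free C" and "c \<noteq> \<infinity>"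
  shows "ert C (\<lambda>\<sigma>. c + f \<sigma>) = (\<lambda>\<sigma>. c + ert C f \<sigma>)"
  using assms
proof (induction C arbitrary: f)
  case Skip
  then show ?case by (simp add: ac_simps)
next
  case (Assign x \<mu>)
  show ?case by (simp add: nn_integral_add measure_pmf.emeasure_space_1 ac_simps)
next
  case (NDChoice C1 C2)
  then show ?case by (auto simp: fun_eq_iff max_def ennreal_add_left_cancel_le)
next
  case (If \<xi> C1 C2)
  then show ?case by (simp add: fun_eq_iff affine_step_add_const ennreal_pmf_True_plus_False)
next
  case (While \<xi> C)
  have shift: "loop_char \<xi> C (\<lambda>\<sigma>. c + f \<sigma>) (\<lambda>\<sigma>. c + Y \<sigma>) \<sigma> = c + loop_char \<xi> C f Y \<sigma>"
    for Y \<sigma>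
  proof -
    have "ennreal (pmf (\<xi> \<sigma>) False) + ennreal (pmf (\<xi> \<sigma>) True) = 1"
      by (metis add.commute ennreal_pmf_True_plus_False)
    with While show ?thesis by (simp add: loop_char_def affine_step_add_const)
  qed
  let ?Z = "ert (While \<xi> C) (\<lambda>\<sigma>. c + f \<sigma>)" and ?L = "ert (While \<xi> C) f"
  have upper: "?Z \<le> (\<lambda>\<sigma>. c + ?L \<sigma>)"
    by (rule ert_While_le, rule le_funI) (simp only: shift flip: ert_While_unfold)
  \<comment> \<open>Since \<open>c \<le> ?Z\<close>, the shifted run-time \<open>?Z - c\<close> is a prefixed point of the unshifted loop.\<close>
  define Y where "Y = (\<lambda>\<sigma>. ?Z \<sigma> - c)"
  have "c \<le> ?Z \<sigma>" for \<sigma> using While.prems(1) by (intro const_le_ert) auto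
  then have Z_eq: "?Z = (\<lambda>\<sigma>. c + Y \<sigma>)"
    unfolding Y_def by (intro ext add_diff_inverse_ennreal[symmetric])
  have "loop_char \<xi> C f Y \<le> Y"
  proof (rule le_funI)
    fix \<sigma>
    have "c + loop_char \<xi> C f Y \<sigma> = loop_char \<xi> C (\<lambda>\<sigma>. c + f \<sigma>) ?Z \<sigma>"
      by (simp only: Z_eq shift)
    also have "\<dots> = c + Y \<sigma>" by (metis Z_eq ert_While_unfold)
    finally show "loop_char \<xi> C f Y \<sigma> \<le> Y \<sigma>"
      using While.prems(2) by (simp add: ennreal_add_left_cancel)
  qed
  then have "?L \<le> Y" by (rule ert_While_le)
  then have "(\<lambda>\<sigma>. c + ?L \<sigma>) \<le> ?Z"
    unfolding Z_eq by (auto simp: le_fun_def intro: add_left_mono)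
  with upper show ?case by (rule antisym)
qed auto

lemma ert_infinity: "halt_free C \<Longrightarrow> ert C (\<lambda>\<sigma>. \<infinity>) = (\<lambda>\<sigma>. \<infinity>)"
  using const_le_ert[of C \<infinity>] by (auto simp: fun_eq_iff top_unique)

lemma affine_step_add_le:
  fixes p q a b c d :: ennreal
  shows "1 + p * (a + b) + q * (c + d) \<le> (1 + p * a + q * c) + (1 + p * b + q * d)"
proof -
  have sum: "(1 + p * a + q * c) + (1 + p * b + q * d) = 1 + (1 + p * (a + b) + q * (c + d))"
    by (simp add: distrib_left ac_simps)
  show ?thesis unfolding sum by (rule add_increasing) auto
qed

lemma ert_add_le:
  "fully_prob C \<Longrightarrow> ert C (\<lambda>\<sigma>. f \<sigma> + g \<sigma>) \<le> (\<lambda>\<sigma>. ert C f \<sigma> + ert C g \<sigma>)"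
proof (induction C arbitrary: f g)
  case Skip
  then show ?case by (simp add: le_fun_def add_increasing ac_simps)
next
  case (Assign x \<mu>)
  show ?case by (simp add: le_fun_def nn_integral_add add_increasing ac_simps)
next
  case (Seq C1 C2)
  then have "ert C1 (ert C2 (\<lambda>\<sigma>. f \<sigma> + g \<sigma>)) \<le> ert C1 (\<lambda>\<sigma>. ert C2 f \<sigma> + ert C2 g \<sigma>)"
    by (intro ert_mono) auto
  also have "\<dots> \<le> (\<lambda>\<sigma>. ert C1 (ert C2 f) \<sigma> + ert C1 (ert C2 g) \<sigma>)"
    using Seq by auto
  finally show ?case by simp
next
  case (If \<xi> C1 C2)
  show ?case
  proof (rule le_funI)
    fix \<sigma>
    let ?p = "ennreal (pmf (\<xi> \<sigma>) True)" and ?q = "ennreal (pmf (\<xi> \<sigma>) False)"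
    have "ert (If \<xi> C1 C2) (\<lambda>\<sigma>. f \<sigma> + g \<sigma>) \<sigma>
        \<le> 1 + ?p * (ert C1 f \<sigma> + ert C1 g \<sigma>) + ?q * (ert C2 f \<sigma> + ert C2 g \<sigma>)"
      using If by (auto simp: le_fun_def intro!: add_mono mult_left_mono)
    also have "\<dots> \<le> ert (If \<xi> C1 C2) f \<sigma> + ert (If \<xi> C1 C2) g \<sigma>"
      by (simp add: affine_step_add_le)
    finally show "ert (If \<xi> C1 C2) (\<lambda>\<sigma>. f \<sigma> + g \<sigma>) \<sigma>
        \<le> ert (If \<xi> C1 C2) f \<sigma> + ert (If \<xi> C1 C2) g \<sigma>" .
  qed
next
  case (While \<xi> C)
  let ?Lf = "ert (While \<xi> C) f" and ?Lg = "ert (While \<xi> C) g"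
  show ?case
  proof (rule ert_While_le, rule le_funI)
    fix \<sigma>
    let ?p = "ennreal (pmf (\<xi> \<sigma>) True)" and ?q = "ennreal (pmf (\<xi> \<sigma>) False)"
    have "loop_char \<xi> C (\<lambda>\<sigma>. f \<sigma> + g \<sigma>) (\<lambda>\<sigma>. ?Lf \<sigma> + ?Lg \<sigma>) \<sigma>
        \<le> 1 + ?q * (f \<sigma> + g \<sigma>) + ?p * (ert C ?Lf \<sigma> + ert C ?Lg \<sigma>)"
      unfolding loop_char_def using While by (auto simp: le_fun_def intro!: add_mono mult_left_mono)
    also have "\<dots> \<le> loop_char \<xi> C f ?Lf \<sigma> + loop_char \<xi> C g ?Lg \<sigma>"
      unfolding loop_char_def by (simp add: affine_step_add_le)
    also have "\<dots> = ?Lf \<sigma> + ?Lg \<sigma>" by (metis ert_While_unfold)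
    finally show "loop_char \<xi> C (\<lambda>\<sigma>. f \<sigma> + g \<sigma>) (\<lambda>\<sigma>. ?Lf \<sigma> + ?Lg \<sigma>) \<sigma>
        \<le> ?Lf \<sigma> + ?Lg \<sigma>" .
  qed
qed (auto simp: le_fun_def)

lemma affine_step_scale_ge:
  fixes r p q a b a' b' :: ennreal
  assumes "r \<le> 1" and "r * a \<le> a'" and "r * b \<le> b'"
  shows "r * (1 + p * a + q * b) \<le> 1 + p * a' + q * b'"
proof -
  have "r * (1 + p * a + q * b) = r + p * (r * a) + q * (r * b)"
    by (simp add: distrib_left ac_simps)
  also have "\<dots> \<le> 1 + p * a' + q * b'"
    using assms by (intro add_mono mult_left_mono) auto
  finally show ?thesis .
qed

lemma affine_step_scale_le:
  fixes r p q a b a' b' :: ennreal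
  assumes "1 \<le> r" and "a' \<le> r * a" and "b' \<le> r * b"
  shows "1 + p * a' + q * b' \<le> r * (1 + p * a + q * b)"
proof -
  have "1 + p * a' + q * b' \<le> r + p * (r * a) + q * (r * b)"
    using assms by (intro add_mono mult_left_mono) auto
  also have "\<dots> = r * (1 + p * a + q * b)"
    by (simp add: distrib_left ac_simps)
  finally show ?thesis .
qed

lemma ert_scale_ge:
  fixes r :: ennreal
  assumes "r \<le> 1"
  shows "(\<lambda>\<sigma>. r * ert C f \<sigma>) \<le> ert C (\<lambda>\<sigma>. r * f \<sigma>)"
proof (induction C arbitrary: f)
  case Skip
  show ?case
    using assms by (intro le_funI) (simp add: distrib_left add_right_mono)
next
  case (Assign x \<mu>)
  show ?case
    using assms by (intro le_funI) (simp add: distrib_left add_right_mono nn_integral_cmult)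
next
  case (Seq C1 C2)
  have "(\<lambda>\<sigma>. r * ert C1 (ert C2 f) \<sigma>) \<le> ert C1 (\<lambda>\<sigma>. r * ert C2 f \<sigma>)"
    by (rule Seq.IH(1))
  also have "\<dots> \<le> ert C1 (ert C2 (\<lambda>\<sigma>. r * f \<sigma>))"
    by (intro ert_mono Seq.IH(2))
  finally show ?case by simp
next
  case (NDChoice C1 C2)
  show ?case
  proof (rule le_funI)
    fix \<sigma>
    have "r * ert (NDChoice C1 C2) f \<sigma> = max (r * ert C1 f \<sigma>) (r * ert C2 f \<sigma>)"
      by (simp add: max_of_mono[OF Rings.mono_mult])
    also have "\<dots> \<le> ert (NDChoice C1 C2) (\<lambda>\<sigma>. r * f \<sigma>) \<sigma>"
      unfolding ert.simps
      by (rule max.mono[OF NDChoice.IH(1)[THEN le_funD] NDChoice.IH(2)[THEN le_funD]])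
    finally show "r * ert (NDChoice C1 C2) f \<sigma> \<le> ert (NDChoice C1 C2) (\<lambda>\<sigma>. r * f \<sigma>) \<sigma>" .
  qed
next
  case (If \<xi> C1 C2)
  show ?case
    unfolding ert.simps
    by (intro le_funI affine_step_scale_ge[OF assms]) (simp_all add: If.IH[THEN le_funD])
next
  case (While \<xi> C)
  let ?Z = "ert (While \<xi> C) (\<lambda>\<sigma>. r * f \<sigma>)"
  have "(\<lambda>\<sigma>. r * lfp (loop_char \<xi> C f) \<sigma>) \<le> ?Z"
  proof (induction rule: lfp_ordinal_induct[OF mono_loop_char])
    case (1 S)
    show ?case
    proof (rule le_funI)
      fix \<sigma>
      have "r * ert C S \<sigma> \<le> ert C ?Z \<sigma>"
        using le_funD[OF While.IH[of S]] le_funD[OF ert_mono[OF 1(1)]] by (rule order_trans)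
      then have "r * loop_char \<xi> C f S \<sigma> \<le> loop_char \<xi> C (\<lambda>\<sigma>. r * f \<sigma>) ?Z \<sigma>"
        unfolding loop_char_def by (rule affine_step_scale_ge[OF assms order.refl])
      also have "\<dots> = ?Z \<sigma>" by (metis ert_While_unfold)
      finally show "r * loop_char \<xi> C f S \<sigma> \<le> ?Z \<sigma>" .
    qed
  next
    case (2 M)
    show ?case
    proof (rule le_funI)
      fix \<sigma>
      have "r * Sup M \<sigma> = (SUP Y\<in>M. r * Y \<sigma>)" by (simp add: SUP_mult_left_ennreal)
      also have "\<dots> \<le> ?Z \<sigma>" using 2 by (auto intro: SUP_least dest: le_funD)
      finally show "r * Sup M \<sigma> \<le> ?Z \<sigma>" .
    qed
  qed
  then show ?case by (simp only: ert_While_lfp)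
qed (simp_all add: le_fun_def)

lemma ert_scale_le:
  fixes r :: ennreal
  assumes "1 \<le> r"
  shows "ert C (\<lambda>\<sigma>. r * f \<sigma>) \<le> (\<lambda>\<sigma>. r * ert C f \<sigma>)"
proof (induction C arbitrary: f)
  case Skip
  show ?case
    using assms by (intro le_funI) (simp add: distrib_left add_right_mono)
next
  case (Assign x \<mu>)
  show ?case
    using assms by (intro le_funI) (simp add: distrib_left add_right_mono nn_integral_cmult)
next
  case (Seq C1 C2)
  have "ert C1 (ert C2 (\<lambda>\<sigma>. r * f \<sigma>)) \<le> ert C1 (\<lambda>\<sigma>. r * ert C2 f \<sigma>)"
    by (intro ert_mono Seq.IH(2))
  also have "\<dots> \<le> (\<lambda>\<sigma>. r * ert C1 (ert C2 f) \<sigma>)"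
    by (rule Seq.IH(1))
  finally show ?case by simp
next
  case (NDChoice C1 C2)
  show ?case
  proof (rule le_funI)
    fix \<sigma>
    have "ert (NDChoice C1 C2) (\<lambda>\<sigma>. r * f \<sigma>) \<sigma> \<le> max (r * ert C1 f \<sigma>) (r * ert C2 f \<sigma>)"
      unfolding ert.simps
      by (rule max.mono[OF NDChoice.IH(1)[THEN le_funD] NDChoice.IH(2)[THEN le_funD]])
    also have "\<dots> = r * ert (NDChoice C1 C2) f \<sigma>"
      by (simp add: max_of_mono[OF Rings.mono_mult])
    finally show "ert (NDChoice C1 C2) (\<lambda>\<sigma>. r * f \<sigma>) \<sigma> \<le> r * ert (NDChoice C1 C2) f \<sigma>" .
  qed
next
  case (If \<xi> C1 C2)
  show ?case
    unfolding ert.simps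
    by (intro le_funI affine_step_scale_le[OF assms]) (simp_all add: If.IH[THEN le_funD])
next
  case (While \<xi> C)
  let ?L = "ert (While \<xi> C) f"
  show ?case
  proof (rule ert_While_le, rule le_funI)
    fix \<sigma>
    have "loop_char \<xi> C (\<lambda>\<sigma>. r * f \<sigma>) (\<lambda>\<sigma>. r * ?L \<sigma>) \<sigma> \<le> r * loop_char \<xi> C f ?L \<sigma>"
      unfolding loop_char_def using assms order.refl le_funD[OF While.IH]
      by (rule affine_step_scale_le)
    also have "\<dots> = r * ?L \<sigma>" by (metis ert_While_unfold)
    finally show "loop_char \<xi> C (\<lambda>\<sigma>. r * f \<sigma>) (\<lambda>\<sigma>. r * ?L \<sigma>) \<sigma> \<le> r * ?L \<sigma>" .
  qed
qed (simp_all add: le_fun_def)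

theorem theorem1:
  fixes C :: "('x, 'v) prog" and k r :: real and f g :: "('x, 'v) runtime"
  assumes "k \<ge> 0" and "r \<ge> 0"
  shows "(f \<le> g \<longrightarrow> ert C f \<le> ert C g)
    \<and> (halt_free C \<longrightarrow> ert C (\<lambda>\<sigma>. ennreal k + f \<sigma>) = (\<lambda>\<sigma>. ennreal k + ert C f \<sigma>))
    \<and> (halt_free C \<longrightarrow> ert C (\<lambda>\<sigma>. \<infinity>) = (\<lambda>\<sigma>. \<infinity>))
    \<and> (fully_prob C \<longrightarrow> ert C (\<lambda>\<sigma>. f \<sigma> + g \<sigma>) \<le> (\<lambda>\<sigma>. ert C f \<sigma> + ert C g \<sigma>))
    \<and> ((\<lambda>\<sigma>. ennreal (min 1 r) * ert C f \<sigma>) \<le> ert C (\<lambda>\<sigma>. ennreal r * f \<sigma>)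
       \<and> ert C (\<lambda>\<sigma>. ennreal r * f \<sigma>) \<le> (\<lambda>\<sigma>. ennreal (max 1 r) * ert C f \<sigma>))"
proof (intro conjI impI)
  show "ert C f \<le> ert C g" if "f \<le> g" using that by (rule ert_mono)
  show "ert C (\<lambda>\<sigma>. ennreal k + f \<sigma>) = (\<lambda>\<sigma>. ennreal k + ert C f \<sigma>)" if "halt_free C"
    using that by (rule ert_add_const) simp
  show "ert C (\<lambda>\<sigma>. \<infinity>) = (\<lambda>\<sigma>. \<infinity>)" if "halt_free C" using that by (rule ert_infinity)
  show "ert C (\<lambda>\<sigma>. f \<sigma> + g \<sigma>) \<le> (\<lambda>\<sigma>. ert C f \<sigma> + ert C g \<sigma>)" if "fully_prob C"
    using that by (rule ert_add_le)
  have scale_mono: "ert C (\<lambda>\<sigma>. ennreal s * f \<sigma>) \<le> ert C (\<lambda>\<sigma>. ennreal t * f \<sigma>)"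
    if "s \<le> t" for s t :: real
    using that by (intro ert_mono le_funI mult_right_mono ennreal_leI) auto
  have "(\<lambda>\<sigma>. ennreal (min 1 r) * ert C f \<sigma>) \<le> ert C (\<lambda>\<sigma>. ennreal (min 1 r) * f \<sigma>)"
    by (rule ert_scale_ge) (simp add: ennreal_le_1)
  also have "\<dots> \<le> ert C (\<lambda>\<sigma>. ennreal r * f \<sigma>)"
    by (rule scale_mono) simp
  finally show "(\<lambda>\<sigma>. ennreal (min 1 r) * ert C f \<sigma>) \<le> ert C (\<lambda>\<sigma>. ennreal r * f \<sigma>)" .
  have "ert C (\<lambda>\<sigma>. ennreal r * f \<sigma>) \<le> ert C (\<lambda>\<sigma>. ennreal (max 1 r) * f \<sigma>)"
    by (rule scale_mono) simp
  also have "\<dots> \<le> (\<lambda>\<sigma>. ennreal (max 1 r) * ert C f \<sigma>)"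
    by (rule ert_scale_le) simp
  finally show "ert C (\<lambda>\<sigma>. ennreal r * f \<sigma>) \<le> (\<lambda>\<sigma>. ennreal (max 1 r) * ert C f \<sigma>)" .
qed

end
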